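(* Let $X$ be a real Banach space and let $A\subset X\times X^*$ be maximal self-cancelling (i.e. self-cancelling and not properly contained in any self-cancelling subset of $X\times X^*$). Then $A^\vdash$ or $-A^\vdash$ is maximal monotone, where $-B=\{(x,-x^* )\mid (x,x^* )\in B\}$.
   Context: $\langle x,x^*\rangle=x^*(x)$. $A$ is self-cancelling if it is a linear subspace of $X\times X^*$ with $\langle x,x^*\rangle=0$ for all $(x,x^* )\in A$. $B^\vdash=\{(y,y^* )\mid \langle x,y^*\rangle+\langle y,x^*\rangle=0\ \forall (x,x^* )\in B\}$. A set $T\subset X\times X^*$ is monotone if $\langle x-y,x^*-y^*\rangle\ge0$ for all $(x,x^* ),(y,y^* )\in T$, and maximal monotone if it is monotone and not properly contained in any monotone set. *)

theory Defs
  imports "HOL-Analysis.Analysis"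
begin

(* The dual X* of X is the type of bounded linear functionals 'a =>L real; pair x xs = xs(x). *)

definition pair :: "'a::real_normed_vector \<Rightarrow> ('a \<Rightarrow>\<^sub>L real) \<Rightarrow> real" where
  "pair x xs = blinfun_apply xs x"

definition self_cancelling :: "('a::real_normed_vector \<times> ('a \<Rightarrow>\<^sub>L real)) set \<Rightarrow> bool" where
  "self_cancelling A \<longleftrightarrow> subspace A \<and> (\<forall>(x, xs)\<in>A. pair x xs = 0)"

definition max_self_cancelling :: "('a::real_normed_vector \<times> ('a \<Rightarrow>\<^sub>L real)) set \<Rightarrow> bool" where
  "max_self_cancelling A \<longleftrightarrow> self_cancelling A \<and>
     (\<forall>B. self_cancelling B \<and> A \<subseteq> B \<longrightarrow> B = A)"

definition perp :: "('a::real_normed_vector \<times> ('a \<Rightarrow>\<^sub>L real)) set \<Rightarrow> ('a \<times> ('a \<Rightarrow>\<^sub>L real)) set" where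
  "perp B = {(y, ys). \<forall>(x, xs)\<in>B. pair x ys + pair y xs = 0}"

definition monotone_set :: "('a::real_normed_vector \<times> ('a \<Rightarrow>\<^sub>L real)) set \<Rightarrow> bool" where
  "monotone_set T \<longleftrightarrow> (\<forall>(x, xs)\<in>T. \<forall>(y, ys)\<in>T. pair (x - y) (xs - ys) \<ge> 0)"

definition max_monotone :: "('a::real_normed_vector \<times> ('a \<Rightarrow>\<^sub>L real)) set \<Rightarrow> bool" where
  "max_monotone T \<longleftrightarrow> monotone_set T \<and> (\<forall>S. monotone_set S \<and> T \<subseteq> S \<longrightarrow> S = T)"

definition neg_set :: "('a::real_normed_vector \<times> ('a \<Rightarrow>\<^sub>L real)) set \<Rightarrow> ('a \<times> ('a \<Rightarrow>\<^sub>L real)) set" where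
  "neg_set B = {(x, - xs) | x xs. (x, xs) \<in> B}"

end

theory Submission
  imports Defs "HOL-Library.Quadratic_Discriminant"
begin

text \<open>
  Write \<open>q(x, x\<^sup>*) = \<langle>x, x\<^sup>*\<rangle>\<close> for the quadratic form on \<open>X \<times> X\<^sup>*\<close>; its polar form
  \<open>b\<close> is exactly the pairing defining \<open>A\<^sup>\<turnstile>\<close>, and monotonicity of a subspace means \<open>q \<ge> 0\<close> on it.
  If \<open>A\<close> is maximal self-cancelling, every \<open>q\<close>-isotropic vector of \<open>A\<^sup>\<turnstile>\<close> already lies in \<open>A\<close>.
  Hence \<open>q\<close> cannot take both signs on \<open>A\<^sup>\<turnstile>\<close>: otherwise a suitable combination
  \<open>z\<^sub>1 + t z\<^sub>2\<close> with \<open>q(z\<^sub>1) > 0 > q(z\<^sub>2)\<close> is isotropic, so lies in \<open>A\<close>, and then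
  \<open>q(z\<^sub>1) = t\<^sup>2 q(z\<^sub>2) \<le> 0\<close>. So \<open>q \<ge> 0\<close> on \<open>A\<^sup>\<turnstile>\<close> or on \<open>-A\<^sup>\<turnstile>\<close>, and a subspace \<open>A\<^sup>\<turnstile>\<close> with
  \<open>q \<ge> 0\<close> is maximal monotone: a point monotonically related to all of \<open>A \<subseteq> A\<^sup>\<turnstile>\<close> is
  \<open>b\<close>-orthogonal to \<open>A\<close>, as \<open>q(w - t a) = q(w) - t b(a, w)\<close> is affine in \<open>t\<close>.
\<close>

definition quad_form :: "'a::real_normed_vector \<times> ('a \<Rightarrow>\<^sub>L real) \<Rightarrow> real" where
  "quad_form z = pair (fst z) (snd z)"

definition polar_form ::
    "'a::real_normed_vector \<times> ('a \<Rightarrow>\<^sub>L real) \<Rightarrow> 'a \<times> ('a \<Rightarrow>\<^sub>L real) \<Rightarrow> real" where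
  "polar_form z w = pair (fst z) (snd w) + pair (fst w) (snd z)"

lemmas pair_linear_simps = pair_def blinfun.add_left blinfun.add_right blinfun.scaleR_left
  blinfun.scaleR_right blinfun.diff_left blinfun.diff_right blinfun.minus_left blinfun.minus_right
  blinfun.zero_left blinfun.zero_right

lemma quad_form_add: "quad_form (z + w) = quad_form z + quad_form w + polar_form z w"
  by (simp add: quad_form_def polar_form_def pair_linear_simps)

lemma quad_form_diff: "quad_form (z - w) = quad_form z + quad_form w - polar_form z w"
  by (simp add: quad_form_def polar_form_def pair_linear_simps)

lemma quad_form_scaleR: "quad_form (t *\<^sub>R z) = t\<^sup>2 * quad_form z"
  by (simp add: quad_form_def pair_linear_simps power2_eq_square)

lemma polar_form_commute: "polar_form z w = polar_form w z"
  by (simp add: polar_form_def)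

lemma polar_form_scaleR_right: "polar_form z (t *\<^sub>R w) = t * polar_form z w"
  by (simp add: polar_form_def pair_linear_simps algebra_simps)

lemma polar_form_add_right: "polar_form z (w + u) = polar_form z w + polar_form z u"
  by (simp add: polar_form_def pair_linear_simps algebra_simps)

lemma polar_form_zero_right: "polar_form z 0 = 0"
  by (simp add: polar_form_def pair_linear_simps)

lemma mem_perp_iff: "w \<in> perp A \<longleftrightarrow> (\<forall>a\<in>A. polar_form a w = 0)"
  by (cases w) (auto simp: perp_def polar_form_def)

lemma subspace_perp: "subspace (perp A)"
  unfolding subspace_def
  by (auto simp: mem_perp_iff polar_form_add_right polar_form_scaleR_right polar_form_zero_right)

lemma self_cancelling_iff_quad_form:
  "self_cancelling A \<longleftrightarrow> subspace A \<and> (\<forall>z\<in>A. quad_form z = 0)"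
  by (auto simp: self_cancelling_def quad_form_def)

lemma monotone_set_iff_quad_form:
  "monotone_set S \<longleftrightarrow> (\<forall>u\<in>S. \<forall>v\<in>S. quad_form (u - v) \<ge> 0)"
  by (simp add: monotone_set_def quad_form_def split_beta)

lemma self_cancelling_polar_form_eq_0:
  assumes "self_cancelling A" "a \<in> A" "c \<in> A"
  shows "polar_form a c = 0"
proof -
  have "a + c \<in> A"
    using assms by (simp add: self_cancelling_iff_quad_form subspace_add)
  then show ?thesis
    using assms quad_form_add[of a c] by (simp add: self_cancelling_iff_quad_form)
qed

lemma self_cancelling_subset_perp: "self_cancelling A \<Longrightarrow> A \<subseteq> perp A"
  using self_cancelling_polar_form_eq_0 by (auto simp: mem_perp_iff)

lemma max_self_cancelling_isotropic_mem:
  assumes max: "max_self_cancelling A" and z: "z \<in> perp A" and iso: "quad_form z = 0"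
  shows "z \<in> A"
proof -
  have sc: "self_cancelling A" and A: "subspace A"
    using max by (auto simp: max_self_cancelling_def self_cancelling_iff_quad_form)
  have "quad_form w = 0" if w: "w \<in> span (insert z A)" for w
  proof -
    obtain t where "w - t *\<^sub>R z \<in> span A"
      using w by (auto simp: span_insert)
    then have "w - t *\<^sub>R z \<in> A"
      using A span_eq_iff by blast
    moreover from this have "polar_form (w - t *\<^sub>R z) z = 0"
      using z by (simp add: mem_perp_iff)
    ultimately have "quad_form (w - t *\<^sub>R z + t *\<^sub>R z) = 0"
      using sc iso
      by (simp only: quad_form_add quad_form_scaleR polar_form_scaleR_right)
        (simp add: self_cancelling_iff_quad_form)
    then show ?thesis by simp
  qed
  then have "self_cancelling (span (insert z A))"
    by (simp add: self_cancelling_iff_quad_form)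
  moreover have "A \<subseteq> span (insert z A)"
    by (meson span_superset subset_insertI subset_trans)
  ultimately have "span (insert z A) = A"
    using max by (simp add: max_self_cancelling_def)
  then show ?thesis
    using span_superset[of "insert z A"] by blast
qed

lemma max_self_cancelling_quad_form_sign:
  assumes max: "max_self_cancelling A"
    and z1: "z1 \<in> perp A" "quad_form z1 > 0"
    and z2: "z2 \<in> perp A" "quad_form z2 < 0"
  shows False
proof -
  have "discrim (quad_form z2) (polar_form z1 z2) (quad_form z1) \<ge> 0"
    using mult_neg_pos[OF z2(2) z1(2)] zero_le_power2[of "polar_form z1 z2"]
    unfolding discrim_def mult.assoc by linarith
  then obtain t where root:
    "quad_form z2 * t\<^sup>2 + polar_form z1 z2 * t + quad_form z1 = 0"
    using discriminant_nonneg_ex z2(2) by (metis less_irrefl)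
  define z where "z = z1 + t *\<^sub>R z2"
  have "z \<in> perp A"
    unfolding z_def using z1(1) z2(1)
    by (intro subspace_add[OF subspace_perp] subspace_scale[OF subspace_perp])
  moreover have iso: "quad_form z = 0"
    using root by (simp add: z_def quad_form_add quad_form_scaleR polar_form_scaleR_right
        algebra_simps)
  ultimately have "z \<in> A"
    using max max_self_cancelling_isotropic_mem by blast
  then have "polar_form z z2 = 0"
    using z2(1) by (simp add: mem_perp_iff)
  then have "quad_form z1 = t\<^sup>2 * quad_form z2"
    using iso quad_form_diff[of z "t *\<^sub>R z2"]
    by (simp add: z_def quad_form_scaleR polar_form_scaleR_right)
  also have "\<dots> \<le> 0"
    using z2(2) by (simp add: mult_nonneg_nonpos)
  finally show False
    using z1(2) by simp
qed

lemma max_monotone_perp_if_quad_form_nonneg: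
  assumes sc: "self_cancelling A" and nonneg: "\<forall>z\<in>perp A. quad_form z \<ge> 0"
  shows "max_monotone (perp A)"
proof -
  have mono: "monotone_set (perp A)"
    unfolding monotone_set_iff_quad_form using nonneg subspace_diff[OF subspace_perp] by blast
  have "w \<in> perp A" if S: "monotone_set S" "perp A \<subseteq> S" and w: "w \<in> S" for S w
  proof -
    have "polar_form a w = 0" if a: "a \<in> A" for a
    proof (rule ccontr)
      assume ne: "polar_form a w \<noteq> 0"
      define t where "t = (quad_form w + 1) / polar_form a w"
      have "t *\<^sub>R a \<in> S"
        using a S(2) self_cancelling_subset_perp[OF sc] subspace_scale[OF subspace_perp]
        by blast
      then have "quad_form (w - t *\<^sub>R a) \<ge> 0"
        using S(1) w by (simp add: monotone_set_iff_quad_form)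
      moreover have "quad_form a = 0"
        using sc a by (simp add: self_cancelling_iff_quad_form)
      ultimately have "quad_form w - t * polar_form a w \<ge> 0"
        by (simp add: quad_form_diff quad_form_scaleR polar_form_scaleR_right polar_form_commute)
      then show False
        using ne by (simp add: t_def)
    qed
    then show ?thesis
      by (simp add: mem_perp_iff)
  qed
  then show ?thesis
    using mono by (auto simp: max_monotone_def)
qed

definition neg_dual :: "'a::real_normed_vector \<times> ('a \<Rightarrow>\<^sub>L real) \<Rightarrow> 'a \<times> ('a \<Rightarrow>\<^sub>L real)" where
  "neg_dual z = (fst z, - snd z)"

lemma neg_dual_neg_dual [simp]: "neg_dual (neg_dual z) = z"
  by (simp add: neg_dual_def)

lemma linear_neg_dual: "linear neg_dual"
  by (rule linearI) (auto simp: neg_dual_def algebra_simps)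

lemma quad_form_neg_dual: "quad_form (neg_dual z) = - quad_form z"
  by (simp add: neg_dual_def quad_form_def pair_linear_simps)

lemma polar_form_neg_dual: "polar_form (neg_dual a) w = - polar_form a (neg_dual w)"
  by (simp add: neg_dual_def polar_form_def pair_linear_simps)

lemma neg_set_eq_image: "neg_set B = neg_dual ` B"
  unfolding neg_set_def neg_dual_def image_def by force

lemma mem_neg_set_iff: "w \<in> neg_set B \<longleftrightarrow> neg_dual w \<in> B"
  unfolding neg_set_eq_image by (metis neg_dual_neg_dual image_iff)

lemma neg_set_neg_set [simp]: "neg_set (neg_set B) = B"
  by (auto simp: mem_neg_set_iff)

lemma neg_set_mono: "A \<subseteq> B \<Longrightarrow> neg_set A \<subseteq> neg_set B"
  by (auto simp: mem_neg_set_iff)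

lemma self_cancelling_neg_set: "self_cancelling B \<Longrightarrow> self_cancelling (neg_set B)"
  unfolding self_cancelling_iff_quad_form neg_set_eq_image
  using linear_subspace_image[OF linear_neg_dual] by (auto simp: quad_form_neg_dual)

lemma max_self_cancelling_neg_set:
  assumes "max_self_cancelling A"
  shows "max_self_cancelling (neg_set A)"
  unfolding max_self_cancelling_def
proof (intro conjI allI impI)
  show "self_cancelling (neg_set A)"
    using assms self_cancelling_neg_set by (auto simp: max_self_cancelling_def)
next
  fix B assume "self_cancelling B \<and> neg_set A \<subseteq> B"
  then have "neg_set B = A"
    using assms self_cancelling_neg_set neg_set_mono
    by (metis max_self_cancelling_def neg_set_neg_set)
  then show "B = neg_set A"
    by auto
qed

lemma perp_neg_set: "perp (neg_set A) = neg_set (perp A)"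
proof -
  have "(\<forall>b\<in>neg_set A. polar_form b w = 0) \<longleftrightarrow> (\<forall>a\<in>A. polar_form a (neg_dual w) = 0)" for w
    using polar_form_neg_dual[of _ w]
    by (metis mem_neg_set_iff neg_dual_neg_dual neg_equal_0_iff_equal)
  then show ?thesis
    by (auto simp: mem_perp_iff mem_neg_set_iff)
qed

theorem lemma6:
  fixes A :: "('a::banach \<times> ('a \<Rightarrow>\<^sub>L real)) set"
  assumes "max_self_cancelling A"
  shows "max_monotone (perp A) \<or> max_monotone (neg_set (perp A))"
proof (cases "\<forall>z\<in>perp A. quad_form z \<ge> 0")
  case True
  then show ?thesis
    using assms max_monotone_perp_if_quad_form_nonneg by (auto simp: max_self_cancelling_def)
next
  case False
  then obtain z1 where "z1 \<in> perp A" "quad_form z1 < 0"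
    by force
  then have nonpos: "quad_form z \<le> 0" if "z \<in> perp A" for z
    using max_self_cancelling_quad_form_sign[OF assms that] by (meson not_le)
  have "quad_form z \<ge> 0" if "z \<in> perp (neg_set A)" for z
    using nonpos[of "neg_dual z"] that
    by (simp add: perp_neg_set mem_neg_set_iff quad_form_neg_dual)
  then have "max_monotone (perp (neg_set A))"
    using max_self_cancelling_neg_set[OF assms] max_monotone_perp_if_quad_form_nonneg
    unfolding max_self_cancelling_def by blast
  then show ?thesis
    by (simp add: perp_neg_set)
qed

end
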